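(* Let $n\geq 4$, let $B\subset\mathbb{R}^{n+1}$ be a symmetric convex body and let $\Gamma_1,\Gamma_2\subset\mathbb{R}^{n+1}$ be two distinct linear hyperplanes such that $K_i=\Gamma_i\cap B$ ($i=1,2$) are affine symmetric bodies of revolution with axes of revolution $L_i$ and associated hyperplanes of revolution $H_i\subset\Gamma_i$. If $L_1\subset H_2$, then $K_1$ is an ellipsoid.
   Context: A symmetric convex body is a compact convex set with nonempty interior invariant under $x\mapsto-x$. A symmetric convex body $K\subset\mathbb{R}^m$ is a symmetric body of revolution if it admits an axis of revolution: a 1-dimensional linear subspace $L$ such that every section of $K$ by an affine hyperplane $A$ orthogonal to $L$ is a closed Euclidean $(m-1)$-ball in $A$ centered at $A\cap L$ (possibly empty or a point); $L^\perp$ is the associated hyperplane of revolution. An affine symmetric body of revolution (in an $m$-dimensional linear subspace) is a convex body linearly equivalent to a symmetric body of revolution; the images of an axis and its associated hyperplane under the linear equivalence are called an axis and associated hyperplane of revolution of it. An ellipsoid is a set affinely equivalent to a closed Euclidean unit ball. *)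

theory Defs
  imports "HOL-Analysis.Analysis"
begin

(* All objects live in an ambient Euclidean space 'a. An m-dimensional linear
subspace V carries the induced Euclidean structure; "R^m" of the paper is modelled
by such a subspace. *)

definition sym_convex_body :: "'a::euclidean_space set \<Rightarrow> 'a set \<Rightarrow> bool" where
  "sym_convex_body V K \<longleftrightarrow> subspace V \<and> K \<subseteq> V \<and> compact K \<and> convex K \<and>
     (\<exists>x\<in>V. \<exists>e>0. ball x e \<inter> V \<subseteq> K) \<and> (\<forall>x\<in>K. - x \<in> K)"

(* L is an axis of revolution of K inside V: every section of K by an affine
hyperplane A of V orthogonal to L is a closed ball of A centred at A \<inter> L
(possibly empty or a point).  Such A are exactly the sets {x \<in> V. x \<bullet> u = t}
with 0 \<noteq> u \<in> L, and A \<inter> L = {(t / (u \<bullet> u)) *\<^sub>R u}. *)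
definition axis_of_revolution :: "'a::euclidean_space set \<Rightarrow> 'a set \<Rightarrow> 'a set \<Rightarrow> bool" where
  "axis_of_revolution V K L \<longleftrightarrow> subspace L \<and> dim L = 1 \<and> L \<subseteq> V \<and>
     (\<forall>u\<in>L. \<forall>t::real. u \<noteq> 0 \<longrightarrow>
        (\<exists>r. K \<inter> {x\<in>V. x \<bullet> u = t} = cball ((t / (u \<bullet> u)) *\<^sub>R u) r \<inter> {x\<in>V. x \<bullet> u = t}))"

definition sym_body_of_revolution :: "'a::euclidean_space set \<Rightarrow> 'a set \<Rightarrow> 'a set \<Rightarrow> bool" where
  "sym_body_of_revolution V K L \<longleftrightarrow> sym_convex_body V K \<and> axis_of_revolution V K L"

definition hyperplane_of_revolution :: "'a::euclidean_space set \<Rightarrow> 'a set \<Rightarrow> 'a set" where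
  "hyperplane_of_revolution V L = {x\<in>V. \<forall>y\<in>L. x \<bullet> y = 0}"

definition affine_sym_body_of_revolution ::
  "'a::euclidean_space set \<Rightarrow> 'a set \<Rightarrow> 'a set \<Rightarrow> 'a set \<Rightarrow> bool" where
  "affine_sym_body_of_revolution V K L H \<longleftrightarrow>
     (\<exists>V0 K0 L0 (T::'a \<Rightarrow> 'a). subspace V0 \<and> linear T \<and> inj_on T V0 \<and> T ` V0 = V \<and>
        sym_body_of_revolution V0 K0 L0 \<and> K = T ` K0 \<and> L = T ` L0 \<and>
        H = T ` hyperplane_of_revolution V0 L0)"

definition ellipsoid :: "'a::euclidean_space set \<Rightarrow> bool" where
  "ellipsoid E \<longleftrightarrow> (\<exists>V0 (T::'a \<Rightarrow> 'a) c. subspace V0 \<and> linear T \<and> inj_on T V0 \<and>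
      E = (\<lambda>x. T x + c) ` (cball 0 1 \<inter> V0))"

definition linear_hyperplane :: "'a::euclidean_space set \<Rightarrow> bool" where
  "linear_hyperplane G \<longleftrightarrow> subspace G \<and> dim G = DIM('a) - 1"

end

theory Submission imports Defs begin

text \<open>
  Write \<open>n + 1 = DIM('a)\<close>. The hyperplanes of revolution \<open>H\<^sub>1, H\<^sub>2\<close> have dimension \<open>n - 1\<close>,
  so for \<open>n \<ge> 4\<close> they share a vector \<open>x \<noteq> 0\<close>. Let \<open>v\<close> span the axis \<open>L\<^sub>1 \<subseteq> H\<^sub>2\<close>. On the
  hyperplane of revolution \<open>H\<^sub>2\<close> the body \<open>B\<close> is a linear image of a Euclidean ball, so the
  section of \<open>K\<^sub>1\<close> by the plane spanned by \<open>v\<close> and \<open>x\<close> is an ellipse: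
  \<open>t v + s x \<in> K\<^sub>1 \<longleftrightarrow> \<parallel>t a + s b\<parallel> \<le> r\<close>. This plane contains the axis of \<open>K\<^sub>1\<close>, so the
  ellipse is symmetric under \<open>s \<mapsto> -s\<close>, whence \<open>\<parallel>a + b\<parallel> = \<parallel>a - b\<parallel>\<close> and \<open>a \<perp> b\<close>. A body of
  revolution is determined by this meridian section, and revolving an ellipse about one of
  its axes gives an ellipsoid.
\<close>

lemma sym_convex_body_ball_subset:
  assumes "sym_convex_body V K"
  obtains \<epsilon> where "\<epsilon> > 0" "ball 0 \<epsilon> \<inter> V \<subseteq> K"
proof -
  obtain x \<epsilon> where V: "subspace V" and "x \<in> V" "\<epsilon> > 0" and ball: "ball x \<epsilon> \<inter> V \<subseteq> K"
    and K: "convex K" "\<forall>y\<in>K. - y \<in> K"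
    using assms unfolding sym_convex_body_def by blast
  have "y \<in> K" if y: "y \<in> ball 0 \<epsilon> \<inter> V" for y
  proof -
    have "x + y \<in> K" "x - y \<in> K"
      using y ball \<open>x \<in> V\<close> V by (auto simp: dist_norm subspace_add subspace_diff)
    moreover have "y - x = - (x - y)"
      by simp
    ultimately have "(1/2) *\<^sub>R (x + y) + (1/2) *\<^sub>R (y - x) \<in> K"
      using K by (intro convexD) auto
    then show ?thesis
      by (simp flip: scaleR_add_right)
  qed
  then show thesis
    using that \<open>\<epsilon> > 0\<close> by blast
qed

lemma subspace_Int_nonzero:
  fixes S T :: "'a::euclidean_space set"
  assumes "subspace S" "subspace T" "DIM('a) < dim S + dim T"
  obtains x where "x \<in> S" "x \<in> T" "x \<noteq> 0"
proof -
  have "dim {x + y |x y. x \<in> S \<and> y \<in> T} + dim (S \<inter> T) = dim S + dim T"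
    using dim_sums_Int[OF assms(1,2)] .
  moreover have "dim {x + y |x y. x \<in> S \<and> y \<in> T} \<le> DIM('a)"
    by (rule dim_subset_UNIV)
  ultimately have "\<not> S \<inter> T \<subseteq> {0}"
    using assms(3) dim_eq_0[of "S \<inter> T"] by linarith
  then show thesis
    using that by blast
qed

subsection \<open>Bodies of revolution\<close>

lemma axis_of_revolution_eq_span_unit:
  assumes "axis_of_revolution V K L"
  obtains e where "e \<in> L" "norm e = 1" "L = span {e}"
proof -
  have L: "subspace L" "dim L = 1"
    using assms unfolding axis_of_revolution_def by auto
  then obtain u where u: "u \<in> L" "u \<noteq> 0"
    using dim_eq_0[of L] by auto
  define e where "e = (1 / norm u) *\<^sub>R u"
  have "e \<in> L" "norm e = 1"
    using L u by (simp_all add: e_def subspace_scale)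
  moreover have "span {e} = L"
  proof (rule subspace_dim_equal)
    show "span {e} \<subseteq> L"
      using L(1) \<open>e \<in> L\<close> by (simp add: span_minimal)
    show "dim L \<le> dim (span {e})"
      using L(2) \<open>norm e = 1\<close> by auto
  qed (use L in simp_all)
  ultimately show thesis
    using that by blast
qed

lemma hyperplane_of_revolution_span:
  "hyperplane_of_revolution V (span {e}) = {x\<in>V. x \<bullet> e = 0}"
  unfolding hyperplane_of_revolution_def span_singleton by auto

lemma subspace_hyperplane_of_revolution:
  assumes "subspace V"
  shows "subspace (hyperplane_of_revolution V L)"
proof -
  have "hyperplane_of_revolution V L = V \<inter> {y. \<forall>x\<in>L. orthogonal x y}"
    unfolding hyperplane_of_revolution_def orthogonal_def by (auto simp: inner_commute)
  then show ?thesis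
    using assms by (simp add: subspace_inter subspace_orthogonal_to_vectors)
qed

lemma dim_hyperplane_of_revolution:
  assumes "subspace V" "axis_of_revolution V K L"
  shows "dim (hyperplane_of_revolution V L) + 1 = dim V"
proof -
  have "subspace L" "L \<subseteq> V" "dim L = 1"
    using assms(2) unfolding axis_of_revolution_def by auto
  moreover have "hyperplane_of_revolution V L = {y\<in>V. \<forall>x\<in>L. orthogonal x y}"
    unfolding hyperplane_of_revolution_def orthogonal_def by (auto simp: inner_commute)
  ultimately show ?thesis
    using dim_subspace_orthogonal_to_vectors[of L V] assms(1) by simp
qed

lemma axis_of_revolution_section:
  assumes "axis_of_revolution V K L" "e \<in> L" "norm e = 1"
  obtains r where "K \<inter> {x\<in>V. x \<bullet> e = t} = cball (t *\<^sub>R e) r \<inter> {x\<in>V. x \<bullet> e = t}"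
proof -
  have "e \<noteq> 0" "e \<bullet> e = 1"
    using assms(3) by (auto simp: dot_square_norm)
  have "\<exists>r. K \<inter> {x\<in>V. x \<bullet> e = t} = cball ((t / (e \<bullet> e)) *\<^sub>R e) r \<inter> {x\<in>V. x \<bullet> e = t}"
    using assms(1,2) \<open>e \<noteq> 0\<close> unfolding axis_of_revolution_def by blast
  then show thesis
    using that \<open>e \<bullet> e = 1\<close> by auto
qed

lemma axis_of_revolution_mem_iff:
  assumes "axis_of_revolution V K L" "e \<in> L" "norm e = 1"
    and "x \<in> V" "y \<in> V" "x \<bullet> e = y \<bullet> e"
    and "norm (x - (x \<bullet> e) *\<^sub>R e) = norm (y - (y \<bullet> e) *\<^sub>R e)"
  shows "x \<in> K \<longleftrightarrow> y \<in> K"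
proof -
  obtain r where r: "K \<inter> {z\<in>V. z \<bullet> e = x \<bullet> e} = cball ((x \<bullet> e) *\<^sub>R e) r \<inter> {z\<in>V. z \<bullet> e = x \<bullet> e}"
    using axis_of_revolution_section[OF assms(1-3)] .
  have "x \<in> K \<longleftrightarrow> x \<in> K \<inter> {z\<in>V. z \<bullet> e = x \<bullet> e}"
    using assms(4) by auto
  also have "\<dots> \<longleftrightarrow> y \<in> K \<inter> {z\<in>V. z \<bullet> e = x \<bullet> e}"
    unfolding r using assms(4-7) by (simp add: dist_norm norm_minus_commute)
  also have "\<dots> \<longleftrightarrow> y \<in> K"
    using assms(5,6) by auto
  finally show ?thesis .
qed

lemma sym_body_of_revolution_hyperplane_cball:
  assumes "sym_body_of_revolution V K L" and nontrivial: "hyperplane_of_revolution V L \<noteq> {0}"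
  obtains r where "r > 0" "\<And>h. h \<in> hyperplane_of_revolution V L \<Longrightarrow> h \<in> K \<longleftrightarrow> norm h \<le> r"
proof -
  have ax: "axis_of_revolution V K L" and body: "sym_convex_body V K"
    using assms(1) unfolding sym_body_of_revolution_def by auto
  obtain e where e: "e \<in> L" "norm e = 1" "L = span {e}"
    using axis_of_revolution_eq_span_unit[OF ax] .
  obtain r where r: "K \<inter> {y\<in>V. y \<bullet> e = 0} = cball 0 r \<inter> {y\<in>V. y \<bullet> e = 0}"
    using axis_of_revolution_section[OF ax e(1,2), of 0] by auto
  have K: "h \<in> K \<longleftrightarrow> norm h \<le> r" if "h \<in> hyperplane_of_revolution V L" for h
  proof -
    have h: "h \<in> V" "h \<bullet> e = 0"
      using that unfolding e(3) hyperplane_of_revolution_span by auto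
    then have "h \<in> K \<longleftrightarrow> h \<in> K \<inter> {y\<in>V. y \<bullet> e = 0}"
      by auto
    then show ?thesis
      unfolding r using h by simp
  qed
  have "subspace (hyperplane_of_revolution V L)"
    using body unfolding sym_convex_body_def by (simp add: subspace_hyperplane_of_revolution)
  then obtain h where h: "h \<in> hyperplane_of_revolution V L" "h \<noteq> 0"
    using nontrivial subspace_0 by blast
  obtain \<epsilon> where "\<epsilon> > 0" and \<epsilon>: "ball 0 \<epsilon> \<inter> V \<subseteq> K"
    using sym_convex_body_ball_subset[OF body] .
  have "(\<epsilon> / (2 * norm h)) *\<^sub>R h \<in> hyperplane_of_revolution V L"
    using \<open>subspace (hyperplane_of_revolution V L)\<close> h(1) by (simp add: subspace_scale)
  moreover have "(\<epsilon> / (2 * norm h)) *\<^sub>R h \<in> K"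
    using \<epsilon> \<open>\<epsilon> > 0\<close> h calculation unfolding hyperplane_of_revolution_def by auto
  ultimately have "\<epsilon> / 2 \<le> r"
    using K \<open>\<epsilon> > 0\<close> h(2) by force
  then show thesis
    using that[OF _ K] \<open>\<epsilon> > 0\<close> by simp
qed

subsection \<open>Scaling along an axis\<close>

definition axial_scaling :: "'a::real_inner \<Rightarrow> real \<Rightarrow> real \<Rightarrow> 'a \<Rightarrow> 'a" where
  "axial_scaling e \<alpha> \<beta> x = (\<alpha> * (x \<bullet> e)) *\<^sub>R e + \<beta> *\<^sub>R (x - (x \<bullet> e) *\<^sub>R e)"

lemma axial_scaling_axial_scaling:
  assumes "e \<bullet> e = 1"
  shows "axial_scaling e \<alpha> \<beta> (axial_scaling e \<gamma> \<delta> x) = axial_scaling e (\<alpha> * \<gamma>) (\<beta> * \<delta>) x"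
proof -
  have "axial_scaling e \<gamma> \<delta> x \<bullet> e = \<gamma> * (x \<bullet> e)"
    using assms by (simp add: axial_scaling_def inner_add_left inner_diff_left)
  then show ?thesis
    by (simp add: axial_scaling_def algebra_simps)
qed

lemma axial_scaling_same [simp]: "axial_scaling e c c x = c *\<^sub>R x"
  by (simp add: axial_scaling_def algebra_simps)

lemma linear_axial_scaling: "linear (axial_scaling e \<alpha> \<beta>)"
  unfolding linear_iff axial_scaling_def by (auto simp: algebra_simps inner_add_left)

lemma inj_axial_scaling:
  assumes "e \<bullet> e = 1" "\<alpha> \<noteq> 0" "\<beta> \<noteq> 0"
  shows "inj (axial_scaling e \<alpha> \<beta>)"
proof (rule inj_on_inverseI)
  fix x
  show "axial_scaling e (1 / \<alpha>) (1 / \<beta>) (axial_scaling e \<alpha> \<beta> x) = x"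
    using assms by (simp add: axial_scaling_axial_scaling)
qed

lemma axial_scaling_in_subspace:
  "subspace V \<Longrightarrow> e \<in> V \<Longrightarrow> x \<in> V \<Longrightarrow> axial_scaling e \<alpha> \<beta> x \<in> V"
  unfolding axial_scaling_def by (intro subspace_add subspace_scale subspace_diff) auto

lemma norm_axial_scaling_power2:
  assumes "e \<bullet> e = 1"
  shows "(norm (axial_scaling e \<alpha> \<beta> x))\<^sup>2 = (\<alpha> * (x \<bullet> e))\<^sup>2 + \<beta>\<^sup>2 * (norm (x - (x \<bullet> e) *\<^sub>R e))\<^sup>2"
proof -
  have "orthogonal ((\<alpha> * (x \<bullet> e)) *\<^sub>R e) (\<beta> *\<^sub>R (x - (x \<bullet> e) *\<^sub>R e))"
    using assms by (simp add: orthogonal_def inner_diff_right inner_commute)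
  then have "(norm (axial_scaling e \<alpha> \<beta> x))\<^sup>2 =
      (norm ((\<alpha> * (x \<bullet> e)) *\<^sub>R e))\<^sup>2 + (norm (\<beta> *\<^sub>R (x - (x \<bullet> e) *\<^sub>R e)))\<^sup>2"
    unfolding axial_scaling_def by (rule norm_add_Pythagorean)
  moreover have "norm e = 1"
    using assms by (simp add: norm_eq_1)
  ultimately show ?thesis
    by (simp add: power_mult_distrib)
qed

lemma sublevel_axial_scaling_eq_image:
  assumes "subspace V" "e \<in> V" "e \<bullet> e = 1" "\<alpha> \<noteq> 0" "\<beta> \<noteq> 0" "r > 0" "K \<subseteq> V"
    and K: "\<And>x. x \<in> V \<Longrightarrow> x \<in> K \<longleftrightarrow> norm (axial_scaling e \<alpha> \<beta> x) \<le> r"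
  shows "K = axial_scaling e (r / \<alpha>) (r / \<beta>) ` (cball 0 1 \<inter> V)"
proof
  show "K \<subseteq> axial_scaling e (r / \<alpha>) (r / \<beta>) ` (cball 0 1 \<inter> V)"
  proof
    fix x assume "x \<in> K"
    then have "x \<in> V" "norm (axial_scaling e \<alpha> \<beta> x) \<le> r"
      using K \<open>K \<subseteq> V\<close> by auto
    moreover have "x = axial_scaling e (r / \<alpha>) (r / \<beta>) (axial_scaling e (\<alpha> / r) (\<beta> / r) x)"
      using assms(3-6) by (simp add: axial_scaling_axial_scaling)
    moreover have "axial_scaling e (\<alpha> / r) (\<beta> / r) x = (1 / r) *\<^sub>R axial_scaling e \<alpha> \<beta> x"
      using axial_scaling_axial_scaling[OF assms(3), of "1 / r" "1 / r" \<alpha> \<beta> x] by simp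
    ultimately show "x \<in> axial_scaling e (r / \<alpha>) (r / \<beta>) ` (cball 0 1 \<inter> V)"
      using assms(1,2,6) by (intro image_eqI) (auto simp: axial_scaling_in_subspace subspace_scale)
  qed
  show "axial_scaling e (r / \<alpha>) (r / \<beta>) ` (cball 0 1 \<inter> V) \<subseteq> K"
  proof
    fix x assume "x \<in> axial_scaling e (r / \<alpha>) (r / \<beta>) ` (cball 0 1 \<inter> V)"
    then obtain z where z: "norm z \<le> 1" "z \<in> V" and x: "x = axial_scaling e (r / \<alpha>) (r / \<beta>) z"
      by auto
    have "axial_scaling e \<alpha> \<beta> x = r *\<^sub>R z"
      unfolding x using assms(3-5) by (simp add: axial_scaling_axial_scaling)
    then have "norm (axial_scaling e \<alpha> \<beta> x) \<le> r"
      using z(1) \<open>r > 0\<close> by (simp add: mult_left_le)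
    then show "x \<in> K"
      using K x z(2) assms(1,2) by (simp add: axial_scaling_in_subspace)
  qed
qed

subsection \<open>Elliptic meridian sections\<close>

lemma norm_eq_if_scaled_norm_le_iff:
  fixes c d :: "'a::real_normed_vector"
  assumes "r > 0" "\<And>l::real. norm (l *\<^sub>R c) \<le> r \<longleftrightarrow> norm (l *\<^sub>R d) \<le> r"
  shows "norm c = norm d"
proof -
  have "norm c \<le> norm d" if cd: "\<And>l::real. norm (l *\<^sub>R c) \<le> r \<longleftrightarrow> norm (l *\<^sub>R d) \<le> r"
    for c d :: 'a
  proof (cases "d = 0")
    case True
    show ?thesis
    proof (rule ccontr)
      assume "\<not> norm c \<le> norm d"
      then have "norm c > 0"
        using True by simp
      moreover have "norm ((2 * r / norm c) *\<^sub>R c) \<le> r"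
        using cd[of "2 * r / norm c"] True \<open>r > 0\<close> by simp
      ultimately show False
        using \<open>r > 0\<close> by simp
    qed
  next
    case False
    then have "norm ((r / norm d) *\<^sub>R c) \<le> r"
      using cd[of "r / norm d"] \<open>r > 0\<close> by simp
    then have "r * norm c \<le> r * norm d"
      using False \<open>r > 0\<close> by (simp add: field_simps)
    then show ?thesis
      using \<open>r > 0\<close> by simp
  qed
  then show ?thesis
    using assms(2) by (meson order_antisym)
qed

text \<open>The meridian section is symmetric about the axis, which forces its conjugate
  semi-axes \<open>a\<close> and \<open>b\<close> to be orthogonal.\<close>

lemma axis_of_revolution_meridian_orthogonal:
  fixes a b :: "'b::real_inner"
  assumes V: "subspace V" and ax: "axis_of_revolution V K L" and e: "e \<in> L" "norm e = 1"
    and f: "f \<in> V" "f \<bullet> e = 0" and "r > 0"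
    and meridian: "\<And>t s. t *\<^sub>R e + s *\<^sub>R f \<in> K \<longleftrightarrow> norm (t *\<^sub>R a + s *\<^sub>R b) \<le> r"
  shows "a \<bullet> b = 0"
proof -
  have "e \<in> V"
    using ax e unfolding axis_of_revolution_def by blast
  have "norm (l *\<^sub>R (a + b)) \<le> r \<longleftrightarrow> norm (l *\<^sub>R (a - b)) \<le> r" for l
  proof -
    have "l *\<^sub>R e + l *\<^sub>R f \<in> K \<longleftrightarrow> l *\<^sub>R e + (- l) *\<^sub>R f \<in> K"
    proof (rule axis_of_revolution_mem_iff[OF ax e])
      show "l *\<^sub>R e + l *\<^sub>R f \<in> V" "l *\<^sub>R e + (- l) *\<^sub>R f \<in> V"
        using V \<open>e \<in> V\<close> f by (simp_all add: subspace_add subspace_diff subspace_scale)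
      have "(l *\<^sub>R e + l *\<^sub>R f) \<bullet> e = l" "(l *\<^sub>R e + (- l) *\<^sub>R f) \<bullet> e = l"
        using e f by (simp_all add: inner_add_left inner_diff_left dot_square_norm)
      then show "(l *\<^sub>R e + l *\<^sub>R f) \<bullet> e = (l *\<^sub>R e + (- l) *\<^sub>R f) \<bullet> e"
        and "norm (l *\<^sub>R e + l *\<^sub>R f - ((l *\<^sub>R e + l *\<^sub>R f) \<bullet> e) *\<^sub>R e) =
          norm (l *\<^sub>R e + (- l) *\<^sub>R f - ((l *\<^sub>R e + (- l) *\<^sub>R f) \<bullet> e) *\<^sub>R e)"
        by simp_all
    qed
    then show ?thesis
      using meridian[of l l] meridian[of l "- l"] by (simp add: scaleR_add_right scaleR_diff_right)
  qed
  then have "(norm (a + b))\<^sup>2 = (norm (a - b))\<^sup>2"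
    using norm_eq_if_scaled_norm_le_iff[OF \<open>r > 0\<close>] by metis
  then show ?thesis
    by (simp add: power2_norm_eq_inner inner_add_left inner_add_right inner_diff_left
        inner_diff_right inner_commute)
qed

lemma axis_of_revolution_elliptic_meridian_mem_iff:
  fixes a b :: "'b::real_inner"
  assumes V: "subspace V" and ax: "axis_of_revolution V K L" and e: "e \<in> L" "norm e = 1"
    and f: "f \<in> V" "f \<bullet> e = 0" "f \<noteq> 0" and "r > 0"
    and meridian: "\<And>t s. t *\<^sub>R e + s *\<^sub>R f \<in> K \<longleftrightarrow> norm (t *\<^sub>R a + s *\<^sub>R b) \<le> r"
    and "x \<in> V"
  shows "x \<in> K \<longleftrightarrow> norm (axial_scaling e (norm a) (norm b / norm f) x) \<le> r"
proof -
  have "e \<in> V" and ee: "e \<bullet> e = 1"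
    using ax e unfolding axis_of_revolution_def by (auto simp: dot_square_norm)
  define t where "t = x \<bullet> e"
  define \<sigma> where "\<sigma> = norm (x - t *\<^sub>R e) / norm f"
  have "x \<in> K \<longleftrightarrow> t *\<^sub>R e + \<sigma> *\<^sub>R f \<in> K"
  proof (rule axis_of_revolution_mem_iff[OF ax e \<open>x \<in> V\<close>])
    show "t *\<^sub>R e + \<sigma> *\<^sub>R f \<in> V"
      using V \<open>e \<in> V\<close> f by (simp add: subspace_add subspace_scale)
    have "(t *\<^sub>R e + \<sigma> *\<^sub>R f) \<bullet> e = t"
      using f ee by (simp add: inner_add_left)
    then show "x \<bullet> e = (t *\<^sub>R e + \<sigma> *\<^sub>R f) \<bullet> e"
      and "norm (x - (x \<bullet> e) *\<^sub>R e) = norm (t *\<^sub>R e + \<sigma> *\<^sub>R f - ((t *\<^sub>R e + \<sigma> *\<^sub>R f) \<bullet> e) *\<^sub>R e)"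
      using f by (simp_all add: t_def \<sigma>_def)
  qed
  also have "\<dots> \<longleftrightarrow> (norm (t *\<^sub>R a + \<sigma> *\<^sub>R b))\<^sup>2 \<le> r\<^sup>2"
    using meridian \<open>r > 0\<close> by (simp add: abs_le_square_iff)
  also have "(norm (t *\<^sub>R a + \<sigma> *\<^sub>R b))\<^sup>2 = t\<^sup>2 * (norm a)\<^sup>2 + \<sigma>\<^sup>2 * (norm b)\<^sup>2"
  proof -
    have "orthogonal (t *\<^sub>R a) (\<sigma> *\<^sub>R b)"
      using axis_of_revolution_meridian_orthogonal[OF V ax e f(1,2) \<open>r > 0\<close> meridian]
      by (simp add: orthogonal_def)
    from norm_add_Pythagorean[OF this] show ?thesis
      by (simp add: power_mult_distrib)
  qed
  also have "\<dots> = (norm (axial_scaling e (norm a) (norm b / norm f) x))\<^sup>2"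
    using f
    by (simp add: norm_axial_scaling_power2[OF ee] t_def \<sigma>_def power_mult_distrib power_divide)
  also have "\<dots> \<le> r\<^sup>2 \<longleftrightarrow> norm (axial_scaling e (norm a) (norm b / norm f) x) \<le> r"
    using \<open>r > 0\<close> by (simp add: abs_le_square_iff)
  finally show ?thesis .
qed

lemma sym_body_of_revolution_elliptic_meridian:
  fixes a b :: "'b::real_inner"
  assumes body: "sym_body_of_revolution V K L" and e: "e \<in> L" "norm e = 1"
    and f: "f \<in> V" "f \<bullet> e = 0" "f \<noteq> 0" and "a \<noteq> 0" "b \<noteq> 0" "r > 0"
    and meridian: "\<And>t s. t *\<^sub>R e + s *\<^sub>R f \<in> K \<longleftrightarrow> norm (t *\<^sub>R a + s *\<^sub>R b) \<le> r"
  obtains S where "linear S" "inj S" "S ` V \<subseteq> V" "K = S ` (cball 0 1 \<inter> V)"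
proof -
  have V: "subspace V" "K \<subseteq> V" and ax: "axis_of_revolution V K L"
    using body unfolding sym_body_of_revolution_def sym_convex_body_def by auto
  have "e \<in> V" and ee: "e \<bullet> e = 1"
    using ax e unfolding axis_of_revolution_def by (auto simp: dot_square_norm)
  define \<alpha> \<beta> where "\<alpha> = norm a" and "\<beta> = norm b / norm f"
  have "\<alpha> \<noteq> 0" "\<beta> \<noteq> 0"
    using \<open>a \<noteq> 0\<close> \<open>b \<noteq> 0\<close> \<open>f \<noteq> 0\<close> by (simp_all add: \<alpha>_def \<beta>_def)
  show thesis
  proof (rule that)
    show "linear (axial_scaling e (r / \<alpha>) (r / \<beta>))"
      by (rule linear_axial_scaling)
    show "inj (axial_scaling e (r / \<alpha>) (r / \<beta>))"
      using \<open>\<alpha> \<noteq> 0\<close> \<open>\<beta> \<noteq> 0\<close> \<open>r > 0\<close> by (simp add: inj_axial_scaling[OF ee])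
    show "axial_scaling e (r / \<alpha>) (r / \<beta>) ` V \<subseteq> V"
      using V \<open>e \<in> V\<close> by (auto simp: axial_scaling_in_subspace)
    show "K = axial_scaling e (r / \<alpha>) (r / \<beta>) ` (cball 0 1 \<inter> V)"
      using V \<open>e \<in> V\<close> ee \<open>\<alpha> \<noteq> 0\<close> \<open>\<beta> \<noteq> 0\<close> \<open>r > 0\<close>
        axis_of_revolution_elliptic_meridian_mem_iff[OF V(1) ax e f \<open>r > 0\<close> meridian]
      by (intro sublevel_axial_scaling_eq_image) (simp_all add: \<alpha>_def \<beta>_def)
  qed
qed

subsection \<open>Affine bodies of revolution\<close>

lemma affine_sym_body_of_revolution_axis:
  assumes "affine_sym_body_of_revolution G K L H"
  obtains v where "v \<in> L" "v \<noteq> 0" "L \<subseteq> G"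
proof -
  obtain V0 K0 L0 and T :: "'a \<Rightarrow> 'a" where T: "linear T" "inj_on T V0" "T ` V0 = G"
    and "subspace V0" and ax: "axis_of_revolution V0 K0 L0" and L: "L = T ` L0"
    using assms unfolding affine_sym_body_of_revolution_def sym_body_of_revolution_def by blast
  obtain e where "e \<in> L0" "norm e = 1"
    using axis_of_revolution_eq_span_unit[OF ax] by blast
  moreover have "L0 \<subseteq> V0"
    using ax unfolding axis_of_revolution_def by blast
  moreover from calculation have "T e \<noteq> 0"
    using T \<open>subspace V0\<close> by (metis inj_on_def linear_0 norm_zero subsetD subspace_0 zero_neq_one)
  ultimately show thesis
    using that T L by blast
qed

lemma affine_sym_body_of_revolution_hyperplane:
  assumes "affine_sym_body_of_revolution G K L H"
  shows "subspace H" "H \<subseteq> G" "dim H + 1 = dim G"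
proof -
  obtain V0 K0 L0 and T :: "'a \<Rightarrow> 'a" where T: "linear T" "inj_on T V0" "T ` V0 = G"
    and "subspace V0" and ax: "axis_of_revolution V0 K0 L0"
    and H: "H = T ` hyperplane_of_revolution V0 L0"
    using assms unfolding affine_sym_body_of_revolution_def sym_body_of_revolution_def by blast
  have sub: "hyperplane_of_revolution V0 L0 \<subseteq> V0"
    unfolding hyperplane_of_revolution_def by blast
  have "subspace (hyperplane_of_revolution V0 L0)"
    using \<open>subspace V0\<close> by (rule subspace_hyperplane_of_revolution)
  then show "subspace H"
    unfolding H by (rule linear_subspace_image[OF T(1)])
  show "H \<subseteq> G"
    unfolding H using sub T(3) by blast
  have "dim H = dim (hyperplane_of_revolution V0 L0)" "dim G = dim V0"
    unfolding H T(3)[symmetric] using T(1,2) sub \<open>subspace V0\<close>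
    by (auto intro!: dim_image_eq intro: inj_on_subset simp: span_eq_iff[THEN iffD2]
        \<open>subspace (hyperplane_of_revolution V0 L0)\<close>)
  then show "dim H + 1 = dim G"
    using dim_hyperplane_of_revolution[OF \<open>subspace V0\<close> ax] by simp
qed

lemma affine_sym_body_of_revolution_hyperplane_section:
  assumes "affine_sym_body_of_revolution G K L H" "H \<noteq> {0}"
  obtains H0 and T :: "'a::euclidean_space \<Rightarrow> 'a" and r
  where "subspace H0" "linear T" "T ` H0 = H" "r > 0"
    "\<And>h. h \<in> H0 \<Longrightarrow> T h \<in> K \<longleftrightarrow> norm h \<le> r"
proof -
  obtain V0 K0 L0 and T :: "'a \<Rightarrow> 'a" where T: "linear T" "inj_on T V0" and "subspace V0"
    and body: "sym_body_of_revolution V0 K0 L0"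
    and K: "K = T ` K0" and H: "H = T ` hyperplane_of_revolution V0 L0"
    using assms(1) unfolding affine_sym_body_of_revolution_def by blast
  define H0 where "H0 = hyperplane_of_revolution V0 L0"
  have "H0 \<subseteq> V0" "K0 \<subseteq> V0"
    using body unfolding H0_def hyperplane_of_revolution_def sym_body_of_revolution_def
      sym_convex_body_def by auto
  have "H0 \<noteq> {0}"
    using assms(2) T(1) unfolding H H0_def[symmetric] by (auto simp: linear_0)
  then obtain r where "r > 0" and r: "\<And>h. h \<in> H0 \<Longrightarrow> h \<in> K0 \<longleftrightarrow> norm h \<le> r"
    using sym_body_of_revolution_hyperplane_cball[OF body] unfolding H0_def by blast
  show thesis
  proof (rule that[OF _ T(1) _ \<open>r > 0\<close>])
    show "subspace H0"
      unfolding H0_def using \<open>subspace V0\<close> by (rule subspace_hyperplane_of_revolution)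
    show "T ` H0 = H"
      unfolding H H0_def ..
    show "T h \<in> K \<longleftrightarrow> norm h \<le> r" if "h \<in> H0" for h
      unfolding K using inj_on_image_mem_iff[OF T(2) _ \<open>K0 \<subseteq> V0\<close>] r[OF that] that \<open>H0 \<subseteq> V0\<close>
      by blast
  qed
qed

lemma affine_sym_body_of_revolution_plane_section:
  fixes v x :: "'a::euclidean_space"
  assumes "affine_sym_body_of_revolution G K L H" "v \<in> H" "x \<in> H" "v \<noteq> 0" "x \<noteq> 0"
  obtains a b :: 'a and r where "a \<noteq> 0" "b \<noteq> 0" "r > 0"
    "\<And>t s. t *\<^sub>R v + s *\<^sub>R x \<in> K \<longleftrightarrow> norm (t *\<^sub>R a + s *\<^sub>R b) \<le> r"
proof -
  have "H \<noteq> {0}"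
    using assms(3,5) by blast
  then obtain H0 and T :: "'a \<Rightarrow> 'a" and r where "subspace H0" "linear T" "T ` H0 = H" "r > 0"
    and hyperplane_section: "\<And>h. h \<in> H0 \<Longrightarrow> T h \<in> K \<longleftrightarrow> norm h \<le> r"
    using affine_sym_body_of_revolution_hyperplane_section[OF assms(1)] by blast
  then obtain a b where "a \<in> H0" "b \<in> H0" "T a = v" "T b = x"
    using assms(2,3) by (metis imageE)
  have "a \<noteq> 0" "b \<noteq> 0"
    using \<open>T a = v\<close> \<open>T b = x\<close> assms(4,5) \<open>linear T\<close> by (auto simp: linear_0)
  have "t *\<^sub>R v + s *\<^sub>R x \<in> K \<longleftrightarrow> norm (t *\<^sub>R a + s *\<^sub>R b) \<le> r" for t s
  proof -
    have "t *\<^sub>R v + s *\<^sub>R x = T (t *\<^sub>R a + s *\<^sub>R b)"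
      using \<open>linear T\<close> \<open>T a = v\<close> \<open>T b = x\<close> by (simp add: linear_add linear_scale)
    moreover have "t *\<^sub>R a + s *\<^sub>R b \<in> H0"
      using \<open>subspace H0\<close> \<open>a \<in> H0\<close> \<open>b \<in> H0\<close> by (simp add: subspace_add subspace_scale)
    ultimately show ?thesis
      using hyperplane_section by simp
  qed
  then show thesis
    using that \<open>a \<noteq> 0\<close> \<open>b \<noteq> 0\<close> \<open>r > 0\<close> by blast
qed

lemma affine_sym_body_of_revolution_ellipsoidI:
  fixes a b :: "'b::real_inner"
  assumes "affine_sym_body_of_revolution G K L H" "v \<in> L" "v \<noteq> 0" "x \<in> H" "x \<noteq> 0"
    and "a \<noteq> 0" "b \<noteq> 0" "r > 0"
    and meridian: "\<And>t s. t *\<^sub>R v + s *\<^sub>R x \<in> K \<longleftrightarrow> norm (t *\<^sub>R a + s *\<^sub>R b) \<le> r"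
  shows "ellipsoid K"
proof -
  obtain V0 K0 L0 and T :: "'a \<Rightarrow> 'a" where T: "linear T" "inj_on T V0"
    and "subspace V0" and body: "sym_body_of_revolution V0 K0 L0"
    and K: "K = T ` K0" and L: "L = T ` L0" and H: "H = T ` hyperplane_of_revolution V0 L0"
    using assms(1) unfolding affine_sym_body_of_revolution_def by blast
  have ax: "axis_of_revolution V0 K0 L0" and "K0 \<subseteq> V0"
    using body unfolding sym_body_of_revolution_def sym_convex_body_def by auto
  obtain e where e: "e \<in> L0" "norm e = 1" "L0 = span {e}"
    using axis_of_revolution_eq_span_unit[OF ax] .
  have "e \<in> V0"
    using ax e(1) unfolding axis_of_revolution_def by auto
  obtain c where v: "v = T (c *\<^sub>R e)"
    using assms(2) unfolding L e(3) span_singleton by auto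
  have "c \<noteq> 0"
    using v assms(3) T(1) by (auto simp: linear_0)
  obtain f where "f \<in> V0" "f \<bullet> e = 0" and x: "x = T f"
    using assms(4) unfolding H e(3) hyperplane_of_revolution_span by auto
  have "f \<noteq> 0"
    using x assms(5) T(1) by (auto simp: linear_0)
  have meridian0: "t *\<^sub>R e + s *\<^sub>R f \<in> K0 \<longleftrightarrow> norm (t *\<^sub>R (a /\<^sub>R c) + s *\<^sub>R b) \<le> r" for t s
  proof -
    have "t *\<^sub>R e + s *\<^sub>R f \<in> V0"
      using \<open>subspace V0\<close> \<open>e \<in> V0\<close> \<open>f \<in> V0\<close> by (simp add: subspace_add subspace_scale)
    then have "t *\<^sub>R e + s *\<^sub>R f \<in> K0 \<longleftrightarrow> T (t *\<^sub>R e + s *\<^sub>R f) \<in> K"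
      unfolding K using T(2) \<open>K0 \<subseteq> V0\<close> by (simp add: inj_on_image_mem_iff)
    also have "T (t *\<^sub>R e + s *\<^sub>R f) = (t / c) *\<^sub>R v + s *\<^sub>R x"
      using T(1) \<open>c \<noteq> 0\<close> by (simp add: v x linear_add linear_scale)
    also have "\<dots> \<in> K \<longleftrightarrow> norm ((t / c) *\<^sub>R a + s *\<^sub>R b) \<le> r"
      by (rule meridian)
    finally show ?thesis
      by (simp add: divide_inverse mult.commute)
  qed
  obtain S where S: "linear S" "inj S" "S ` V0 \<subseteq> V0" "K0 = S ` (cball 0 1 \<inter> V0)"
    using sym_body_of_revolution_elliptic_meridian[OF body e(1,2) \<open>f \<in> V0\<close> \<open>f \<bullet> e = 0\<close> \<open>f \<noteq> 0\<close>
        _ \<open>b \<noteq> 0\<close> \<open>r > 0\<close> meridian0] \<open>a \<noteq> 0\<close> \<open>c \<noteq> 0\<close> by auto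
  have "K = (\<lambda>z. (T \<circ> S) z + 0) ` (cball 0 1 \<inter> V0)"
    by (simp add: K S(4) image_comp)
  moreover have "linear (T \<circ> S)"
    using T(1) S(1) by (rule linear_compose[rotated])
  moreover have "inj_on (T \<circ> S) V0"
    using S(2,3) T(2) by (auto intro: comp_inj_on inj_on_subset)
  ultimately show ?thesis
    unfolding ellipsoid_def using \<open>subspace V0\<close> by blast
qed

theorem mainTheorem12:
  fixes B G1 G2 L1 L2 H1 H2 :: "'a::euclidean_space set"
  assumes "DIM('a) \<ge> 5"
    and "sym_convex_body UNIV B"
    and "linear_hyperplane G1" and "linear_hyperplane G2" and "G1 \<noteq> G2"
    and "affine_sym_body_of_revolution G1 (G1 \<inter> B) L1 H1"
    and "affine_sym_body_of_revolution G2 (G2 \<inter> B) L2 H2"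
    and "L1 \<subseteq> H2"
  shows "ellipsoid (G1 \<inter> B)"
proof -
  note H1 = affine_sym_body_of_revolution_hyperplane[OF assms(6)]
  note H2 = affine_sym_body_of_revolution_hyperplane[OF assms(7)]
  have "DIM('a) < dim H1 + dim H2"
    using H1(3) H2(3) assms(1,3,4) unfolding linear_hyperplane_def by linarith
  then obtain x where "x \<in> H1" "x \<in> H2" "x \<noteq> 0"
    using subspace_Int_nonzero[OF H1(1) H2(1)] by blast
  obtain v where "v \<in> L1" "v \<noteq> 0" "L1 \<subseteq> G1"
    using affine_sym_body_of_revolution_axis[OF assms(6)] .
  obtain a b :: 'a and r where "a \<noteq> 0" "b \<noteq> 0" "r > 0"
    and plane_section: "\<And>t s. t *\<^sub>R v + s *\<^sub>R x \<in> G2 \<inter> B \<longleftrightarrow> norm (t *\<^sub>R a + s *\<^sub>R b) \<le> r"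
    using affine_sym_body_of_revolution_plane_section[OF assms(7)] \<open>v \<in> L1\<close> assms(8)
      \<open>x \<in> H2\<close> \<open>v \<noteq> 0\<close> \<open>x \<noteq> 0\<close> by blast
  have "t *\<^sub>R v + s *\<^sub>R x \<in> G1 \<inter> G2" for t s
    using assms(3) H1(2) H2(1,2) \<open>v \<in> L1\<close> \<open>L1 \<subseteq> G1\<close> assms(8) \<open>x \<in> H1\<close> \<open>x \<in> H2\<close>
    unfolding linear_hyperplane_def by (blast intro: subspace_add subspace_scale)
  then have "t *\<^sub>R v + s *\<^sub>R x \<in> G1 \<inter> B \<longleftrightarrow> norm (t *\<^sub>R a + s *\<^sub>R b) \<le> r" for t s
    using plane_section by blast
  then show ?thesis
    using affine_sym_body_of_revolution_ellipsoidI[OF assms(6) \<open>v \<in> L1\<close> \<open>v \<noteq> 0\<close> \<open>x \<in> H1\<close>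
        \<open>x \<noteq> 0\<close> \<open>a \<noteq> 0\<close> \<open>b \<noteq> 0\<close> \<open>r > 0\<close>] by blast
qed

end
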